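(* Let $\delta_1,\delta_2>0$, $0<\lambda<\tfrac12$, $0<\alpha_1<1-2\lambda$ and $1-2\lambda<\alpha_2<1$, and consider the ODEs on $\mathbb{R}^3_+=\{(x_1,x_2,s):x_1,x_2,s>0\}$ $$\dot x_j=\delta_j\frac{s-\lambda}{s+\alpha_j}x_j\ (j=1,2),\qquad \dot s=s(1-s)-\frac{s}{s+\alpha_1}x_1-\frac{s}{s+\alpha_2}x_2.$$ These possess the line of equilibria $L=\{(x_1,x_2,\lambda)\in\mathbb{R}^3_+: \frac{x_1}{\lambda+\alpha_1}+\frac{x_2}{\lambda+\alpha_2}=1-\lambda\}$. Then the point $$X_H=\left(\frac{(\lambda+\alpha_1)^2(2\lambda+\alpha_2-1)}{\alpha_2-\alpha_1},\ \frac{(\lambda+\alpha_2)^2(1-2\lambda-\alpha_1)}{\alpha_2-\alpha_1},\ \lambda\right)\in L$$ is an elliptic Hopf point.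
   Context: A point $X_H$ on a line of equilibria $L$ of a smooth 3-dimensional ODE is a Hopf point if, after an affine linear change of coordinates $X=(y,z)\in\mathbb{R}^2\times\mathbb{R}$ placing $X_H$ at the origin and $L$ on $\{y=0\}$, the vector field $F=(f^y,f^z)$ satisfies $F(0,z)=0$ for all $z$, its Jacobian at the origin is $\begin{pmatrix}0&-\omega&0\\ \omega&0&0\\0&0&0\end{pmatrix}$ for some $\omega>0$, and $\partial_z(\partial_{y_1}f^{y_1}+\partial_{y_2}f^{y_2})(0,0)\neq0$. It is called elliptic if in addition $\Delta_yf^z(0,0)\neq0$ (with $\Delta_y=\partial_{y_1}^2+\partial_{y_2}^2$) and the discriminant $\xi=\mathrm{sign}\big(\partial_z(\partial_{y_1}f^{y_1}+\partial_{y_2}f^{y_2})(0,0)\cdot\Delta_yf^z(0,0)\big)$ equals $-1$ (hyperbolic if $\xi=1$). *)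

theory Defs
  imports "HOL-Analysis.Analysis"
begin

definition dpart :: "3 \<Rightarrow> (real^3 \<Rightarrow> real) \<Rightarrow> real^3 \<Rightarrow> real" where
  "dpart i f u = deriv (\<lambda>t. f (u + t *\<^sub>R axis i 1)) 0"

fun ipart :: "3 list \<Rightarrow> (real^3 \<Rightarrow> real) \<Rightarrow> real^3 \<Rightarrow> real" where
  "ipart [] f = f"
| "ipart (i # is) f = dpart i (ipart is f)"

definition smooth_on :: "(real^3) set \<Rightarrow> (real^3 \<Rightarrow> real) \<Rightarrow> bool" where
  "smooth_on D f \<longleftrightarrow> open D \<and>
     (\<forall>is. continuous_on D (ipart is f)) \<and>
     (\<forall>is i. \<forall>u\<in>D. (\<lambda>t. ipart is f (u + t *\<^sub>R axis i 1)) differentiable (at 0))"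

definition smooth_field_on :: "(real^3) set \<Rightarrow> (real^3 \<Rightarrow> real^3) \<Rightarrow> bool" where
  "smooth_field_on D F \<longleftrightarrow> (\<forall>k. smooth_on D (\<lambda>u. F u $ k))"

(* Vector field in the new coordinates u = (y1,y2,z), where X = A u + X0 *)
definition transf :: "real^3^3 \<Rightarrow> real^3 \<Rightarrow> (real^3 \<Rightarrow> real^3) \<Rightarrow> real^3 \<Rightarrow> real^3" where
  "transf A X0 F = (\<lambda>u. matrix_inv A *v F (A *v u + X0))"

definition hopf_jac :: "real \<Rightarrow> real^3^3" where
  "hopf_jac \<omega> = vector [vector [0, -\<omega>, 0], vector [\<omega>, 0, 0], vector [0, 0, 0]]"

definition hopf_coords ::
  "(real^3) set \<Rightarrow> (real^3 \<Rightarrow> real^3) \<Rightarrow> (real^3) set \<Rightarrow> real^3 \<Rightarrow> real^3^3 \<Rightarrow> real \<Rightarrow> bool" where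
  "hopf_coords D F L X0 A \<omega> \<longleftrightarrow>
     smooth_field_on D F \<and> L \<subseteq> D \<and> (\<forall>Y\<in>L. F Y = 0) \<and> X0 \<in> L \<and>
     invertible A \<and> \<omega> > 0 \<and>
     L \<subseteq> {A *v u + X0 | u. u $ 1 = 0 \<and> u $ 2 = 0} \<and>
     (\<forall>u. u $ 1 = 0 \<and> u $ 2 = 0 \<longrightarrow> transf A X0 F u = 0) \<and>
     (\<forall>i j. dpart j (\<lambda>u. transf A X0 F u $ i) 0 = hopf_jac \<omega> $ i $ j) \<and>
     ipart [3, 1] (\<lambda>u. transf A X0 F u $ 1) 0 + ipart [3, 2] (\<lambda>u. transf A X0 F u $ 2) 0 \<noteq> 0"

definition hopf_point ::
  "(real^3) set \<Rightarrow> (real^3 \<Rightarrow> real^3) \<Rightarrow> (real^3) set \<Rightarrow> real^3 \<Rightarrow> bool" where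
  "hopf_point D F L X0 \<longleftrightarrow> (\<exists>A \<omega>. hopf_coords D F L X0 A \<omega>)"

definition elliptic_hopf_point ::
  "(real^3) set \<Rightarrow> (real^3 \<Rightarrow> real^3) \<Rightarrow> (real^3) set \<Rightarrow> real^3 \<Rightarrow> bool" where
  "elliptic_hopf_point D F L X0 \<longleftrightarrow> (\<exists>A \<omega>. hopf_coords D F L X0 A \<omega> \<and>
     (let G = transf A X0 F;
          a = ipart [3, 1] (\<lambda>u. G u $ 1) 0 + ipart [3, 2] (\<lambda>u. G u $ 2) 0;
          b = ipart [1, 1] (\<lambda>u. G u $ 3) 0 + ipart [2, 2] (\<lambda>u. G u $ 3) 0
      in b \<noteq> 0 \<and> sgn (a * b) = -1))"

definition pos3 :: "(real^3) set" where
  "pos3 = {X. X $ 1 > 0 \<and> X $ 2 > 0 \<and> X $ 3 > 0}"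

definition chemo_F :: "real \<Rightarrow> real \<Rightarrow> real \<Rightarrow> real \<Rightarrow> real \<Rightarrow> real^3 \<Rightarrow> real^3" where
  "chemo_F d1 d2 lam a1 a2 = (\<lambda>X. vector
     [d1 * (X $ 3 - lam) / (X $ 3 + a1) * X $ 1,
      d2 * (X $ 3 - lam) / (X $ 3 + a2) * X $ 2,
      X $ 3 * (1 - X $ 3) - X $ 3 / (X $ 3 + a1) * X $ 1 - X $ 3 / (X $ 3 + a2) * X $ 2])"

definition chemo_L :: "real \<Rightarrow> real \<Rightarrow> real \<Rightarrow> (real^3) set" where
  "chemo_L lam a1 a2 = {X \<in> pos3. X $ 3 = lam \<and> X $ 1 / (lam + a1) + X $ 2 / (lam + a2) = 1 - lam}"

end

theory Submission
  imports Defs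
begin

(* At X_H = (x1, x2, lam) the Jacobian of F is [[0,0,p1],[0,0,p2],[-lam/k1,-lam/k2,0]], where
   k_j = lam + a_j and p_j = d_j x_j / k_j; its (s,s)-entry vanishes precisely because of the
   choice of X_H on L. The kernel is spanned by the direction (k1,-k2,0) of L, and on the plane
   spanned by (0,0,1) and (p1,p2,0) the Jacobian is a rotation with frequency w, where
   w^2 = lam (p1/k1 + p2/k2). In the coordinates X = A u + X_H adapted to this splitting the
   Jacobian is in Hopf normal form, and a direct computation gives
   d_z (div_y) = lam/k1 - lam/k2  and  Laplace_y f^z = -2 w^2 p1 p2 (1/k1 - 1/k2) / (p2 k1 + p1 k2).
   Both signs are decided by k1 < k2, i.e. a1 < a2, so the discriminant is -1. Smoothness holds
   because F is rational with denominators s + a_j > 0 on the positive octant. *)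

inductive rational_fun_on :: "(real^3) set \<Rightarrow> (real^3 \<Rightarrow> real) \<Rightarrow> bool" for D where
  rational_const: "rational_fun_on D (\<lambda>u. c)"
| rational_coord: "rational_fun_on D (\<lambda>u. u $ k)"
| rational_add: "rational_fun_on D f \<Longrightarrow> rational_fun_on D g \<Longrightarrow> rational_fun_on D (\<lambda>u. f u + g u)"
| rational_mult: "rational_fun_on D f \<Longrightarrow> rational_fun_on D g \<Longrightarrow> rational_fun_on D (\<lambda>u. f u * g u)"
| rational_inverse: "rational_fun_on D f \<Longrightarrow> (\<forall>u\<in>D. f u \<noteq> 0) \<Longrightarrow> rational_fun_on D (\<lambda>u. inverse (f u))"
| rational_cong: "rational_fun_on D f \<Longrightarrow> (\<forall>u\<in>D. f u = g u) \<Longrightarrow> rational_fun_on D g"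

lemma rational_fun_on_diff:
  assumes "rational_fun_on D f" "rational_fun_on D g"
  shows "rational_fun_on D (\<lambda>u. f u - g u)"
proof -
  have "rational_fun_on D (\<lambda>u. f u + (-1) * g u)"
    using assms by (intro rational_add rational_mult[OF rational_const])
  then show ?thesis by (rule rational_cong) simp
qed

lemma rational_fun_on_divide:
  assumes "rational_fun_on D f" "rational_fun_on D g" "\<forall>u\<in>D. g u \<noteq> 0"
  shows "rational_fun_on D (\<lambda>u. f u / g u)"
proof -
  have "rational_fun_on D (\<lambda>u. f u * inverse (g u))"
    using assms by (intro rational_mult rational_inverse)
  then show ?thesis by (rule rational_cong) (simp add: divide_inverse)
qed

lemma continuous_on_rational_fun: "rational_fun_on D f \<Longrightarrow> continuous_on D f"
proof (induction rule: rational_fun_on.induct)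
  case (rational_cong f g)
  then show ?case using continuous_on_cong by blast
qed (auto intro!: continuous_intros)

lemma rational_fun_on_axis_derivative:
  assumes "rational_fun_on D f" "open D"
  obtains f' where "rational_fun_on D f'"
    "\<And>u. u \<in> D \<Longrightarrow> ((\<lambda>t. f (u + t *\<^sub>R axis i 1)) has_real_derivative f' u) (at 0)"
proof -
  have "\<exists>f'. rational_fun_on D f' \<and>
          (\<forall>u\<in>D. ((\<lambda>t. f (u + t *\<^sub>R axis i 1)) has_real_derivative f' u) (at 0))"
    using assms(1)
  proof (induction rule: rational_fun_on.induct)
    case (rational_const c)
    show ?case by (intro exI[of _ "\<lambda>u. 0"]) (auto intro: rational_fun_on.rational_const)
  next
    case (rational_coord k)
    show ?case
      by (intro exI[of _ "\<lambda>u. if k = i then 1 else 0"])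
         (auto simp: axis_def intro!: rational_fun_on.rational_const derivative_eq_intros)
  next
    case (rational_add f g)
    then obtain f' g' where "rational_fun_on D f'" "rational_fun_on D g'"
      and "\<forall>u\<in>D. ((\<lambda>t. f (u + t *\<^sub>R axis i 1)) has_real_derivative f' u) (at 0)"
          "\<forall>u\<in>D. ((\<lambda>t. g (u + t *\<^sub>R axis i 1)) has_real_derivative g' u) (at 0)" by blast
    then show ?case
      by (intro exI[of _ "\<lambda>u. f' u + g' u"])
         (auto intro!: rational_fun_on.rational_add derivative_eq_intros)
  next
    case (rational_mult f g)
    then obtain f' g' where f': "rational_fun_on D f'" and g': "rational_fun_on D g'"
      and df: "\<forall>u\<in>D. ((\<lambda>t. f (u + t *\<^sub>R axis i 1)) has_real_derivative f' u) (at 0)"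
      and dg: "\<forall>u\<in>D. ((\<lambda>t. g (u + t *\<^sub>R axis i 1)) has_real_derivative g' u) (at 0)" by blast
    have "((\<lambda>t. f (u + t *\<^sub>R axis i 1) * g (u + t *\<^sub>R axis i 1)) has_real_derivative
            f' u * g u + f u * g' u) (at 0)" if "u \<in> D" for u
      using DERIV_mult[OF df[rule_format, OF that] dg[rule_format, OF that]]
      by (simp add: mult.commute)
    then show ?case
      using rational_mult.hyps f' g'
      by (intro exI[of _ "\<lambda>u. f' u * g u + f u * g' u"])
         (auto intro!: rational_fun_on.rational_add rational_fun_on.rational_mult)
  next
    case (rational_inverse f)
    then obtain f' where f': "rational_fun_on D f'"
      and df: "\<forall>u\<in>D. ((\<lambda>t. f (u + t *\<^sub>R axis i 1)) has_real_derivative f' u) (at 0)" by blast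
    let ?f_inv = "\<lambda>u. inverse (f u)"
    have "((\<lambda>t. inverse (f (u + t *\<^sub>R axis i 1))) has_real_derivative
            (- 1) * f' u * (?f_inv u * ?f_inv u)) (at 0)" if "u \<in> D" for u
      using DERIV_inverse_fun[OF df[rule_format, OF that]] rational_inverse.hyps(2) that
      by (simp add: power2_eq_square divide_inverse)
    moreover have "rational_fun_on D ?f_inv"
      using rational_inverse.hyps by (rule rational_fun_on.rational_inverse)
    then have "rational_fun_on D (\<lambda>u. (- 1) * f' u * (?f_inv u * ?f_inv u))"
      using f' by (intro rational_fun_on.rational_mult rational_fun_on.rational_const)
    ultimately show ?case by blast
  next
    case (rational_cong f g)
    then obtain f' where f': "rational_fun_on D f'"
      and df: "\<forall>u\<in>D. ((\<lambda>t. f (u + t *\<^sub>R axis i 1)) has_real_derivative f' u) (at 0)" by blast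
    have "((\<lambda>t. g (u + t *\<^sub>R axis i 1)) has_real_derivative f' u) (at 0)" if uD: "u \<in> D" for u
    proof -
      obtain e where e: "e > 0" "ball u e \<subseteq> D" using assms(2) uD by (meson open_contains_ball)
      show ?thesis
      proof (rule has_field_derivative_transform_within_open[OF df[rule_format, OF uD], of "ball 0 e"])
        fix t :: real assume "t \<in> ball 0 e"
        then have "u + t *\<^sub>R axis i 1 \<in> ball u e" by (simp add: dist_norm)
        then show "f (u + t *\<^sub>R axis i 1) = g (u + t *\<^sub>R axis i 1)"
          using e rational_cong.hyps(2) by blast
      qed (use e in auto)
    qed
    then show ?case using f' by blast
  qed
  then show ?thesis using that by blast
qed

lemma rational_fun_on_ipart:
  assumes "open D" "rational_fun_on D f"
  shows "rational_fun_on D (ipart is f)"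
proof (induction "is")
  case Nil
  then show ?case using assms(2) by simp
next
  case (Cons i "is")
  then obtain f' where f': "rational_fun_on D f'"
    and df: "\<And>u. u \<in> D \<Longrightarrow> ((\<lambda>t. ipart is f (u + t *\<^sub>R axis i 1)) has_real_derivative f' u) (at 0)"
    using rational_fun_on_axis_derivative assms(1) by blast
  have "\<forall>u\<in>D. f' u = ipart (i # is) f u"
    using df by (auto simp: dpart_def intro: DERIV_imp_deriv[symmetric])
  then show ?case using rational_cong[OF f'] by blast
qed

lemma smooth_on_rational_fun:
  assumes "open D" "rational_fun_on D f"
  shows "smooth_on D f"
  unfolding smooth_on_def
proof (intro conjI allI ballI)
  show "open D" by (rule assms(1))
  show "continuous_on D (ipart is f)" for "is"
    using assms rational_fun_on_ipart continuous_on_rational_fun by blast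
  show "(\<lambda>t. ipart is f (u + t *\<^sub>R axis i 1)) differentiable (at 0)" if "u \<in> D" for "is" i u
    using rational_fun_on_axis_derivative[OF rational_fun_on_ipart[OF assms] assms(1)] that
    by (metis real_differentiable_def)
qed

lemma matrix_inv_eqI:
  fixes A B :: "'a::semiring_1^'n^'n"
  assumes "A ** B = mat 1" "B ** A = mat 1"
  shows "matrix_inv A = B"
  unfolding matrix_inv_def
proof (rule some_equality)
  fix A' assume "A ** A' = mat 1 \<and> A' ** A = mat 1"
  then have "A' = A' ** (A ** B)" "A' ** A = mat 1" by (simp_all add: assms matrix_mul_rid)
  then show "A' = B" by (simp add: matrix_mul_assoc matrix_mul_lid)
qed (use assms in auto)

lemma dpart_eqI:
  assumes "(h has_real_derivative D) (at 0)" "open S" "0 \<in> S"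
    and "\<And>t. t \<in> S \<Longrightarrow> f (u + t *\<^sub>R axis i 1) = h t"
  shows "dpart i f u = D"
proof -
  have "((\<lambda>t. f (u + t *\<^sub>R axis i 1)) has_real_derivative D) (at 0)"
    using assms by (intro has_field_derivative_transform_within_open[OF assms(1)]) auto
  then show ?thesis by (simp add: dpart_def DERIV_imp_deriv)
qed

lemma dpart_eq_0_if_constant_along:
  assumes "\<And>t. f (u + t *\<^sub>R axis i 1) = c"
  shows "dpart i f u = 0"
  using assms by (intro dpart_eqI[of "\<lambda>t. c" _ UNIV]) auto

lemma open_pos3: "open pos3"
proof -
  have "pos3 = {X::real^3. X$1 > 0} \<inter> {X. X$2 > 0} \<inter> {X. X$3 > 0}" by (auto simp: pos3_def)
  then show ?thesis by (metis open_Int open_halfspace_component_gt_cart)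
qed

lemma smooth_field_on_chemo_F:
  assumes "a1 > 0" "a2 > 0"
  shows "smooth_field_on pos3 (chemo_F d1 d2 lam a1 a2)"
  unfolding smooth_field_on_def
proof
  fix k :: 3
  have denom: "\<forall>u\<in>pos3. u $ 3 + a1 \<noteq> 0" "\<forall>u\<in>pos3. u $ 3 + a2 \<noteq> 0"
    using assms by (auto simp: pos3_def add_pos_pos dest: less_imp_neq[symmetric])
  have "rational_fun_on pos3 (\<lambda>u. chemo_F d1 d2 lam a1 a2 u $ k)"
    using exhaust_3[of k]
    by (elim disjE; simp add: chemo_F_def;
        intro rational_const rational_coord rational_add rational_mult
              rational_fun_on_diff rational_fun_on_divide denom)
  then show "smooth_on pos3 (\<lambda>u. chemo_F d1 d2 lam a1 a2 u $ k)"
    using smooth_on_rational_fun open_pos3 by blast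
qed

lemma chemo_F_vanishes_on_chemo_L:
  assumes "Y \<in> chemo_L lam a1 a2"
  shows "chemo_F d1 d2 lam a1 a2 Y = 0"
proof -
  have Y: "Y $ 3 = lam" "Y $ 1 / (lam + a1) + Y $ 2 / (lam + a2) = 1 - lam"
    using assms by (auto simp: chemo_L_def)
  then have "lam * (Y $ 1 / (lam + a1) + Y $ 2 / (lam + a2)) = lam * (1 - lam)" by simp
  then show ?thesis
    by (simp add: chemo_F_def vec_eq_iff forall_3 Y algebra_simps)
qed

locale chemostat_hopf =
  fixes d1 d2 lam a1 a2 :: real
  assumes d1_pos: "d1 > 0" and d2_pos: "d2 > 0" and lam_pos: "lam > 0"
    and a1_pos: "a1 > 0" and a1_less: "a1 < 1 - 2*lam" and a2_greater: "1 - 2*lam < a2"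
begin

definition "k1 = lam + a1"
definition "k2 = lam + a2"
definition "x1 = k1^2 * (2*lam + a2 - 1) / (a2 - a1)"
definition "x2 = k2^2 * (1 - 2*lam - a1) / (a2 - a1)"
definition "X_hopf = (vector [x1, x2, lam] :: real^3)"
definition "p1 = d1 * x1 / k1"
definition "p2 = d2 * x2 / k2"
definition "w = sqrt (p1 * lam / k1 + p2 * lam / k2)"
definition "den = p2 * k1 + p1 * k2"

(* Columns (0,0,w), (p1,p2,0), (k1,-k2,0): the Jacobian of F at X_hopf maps the first to w times
   the second and the second to -w times the first, and kills the third, which spans L. *)
definition "A = (vector [vector [0, p1, k1], vector [0, p2, -k2], vector [w, 0, 0]] :: real^3^3)"
definition "B = (vector [vector [0, 0, 1/w], vector [k2/den, k1/den, 0], vector [p2/den, -p1/den, 0]] :: real^3^3)"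

abbreviation "F \<equiv> chemo_F d1 d2 lam a1 a2"
abbreviation "L \<equiv> chemo_L lam a1 a2"
abbreviation "G \<equiv> transf A X_hopf F"

lemma k_pos: "k1 > 0" "k2 > 0" and k1_less_k2: "k1 < k2"
  using lam_pos a1_pos a1_less a2_greater by (auto simp: k1_def k2_def)

lemma x_pos: "x1 > 0" "x2 > 0"
  using a1_less a2_greater k_pos by (auto simp: x1_def x2_def)

lemma p_pos: "p1 > 0" "p2 > 0"
  using d1_pos d2_pos x_pos k_pos by (auto simp: p1_def p2_def)

lemma w_pos: "w > 0" and w_squared: "w^2 = p1 * lam / k1 + p2 * lam / k2"
proof -
  have "p1 * lam / k1 + p2 * lam / k2 > 0"
    using lam_pos k_pos p_pos by (intro add_pos_pos divide_pos_pos mult_pos_pos)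
  then show "w > 0" "w^2 = p1 * lam / k1 + p2 * lam / k2" by (simp_all add: w_def)
qed

lemma den_pos: "den > 0"
  using k_pos p_pos by (simp add: den_def add_pos_pos)

lemma k_w_den_nonzero: "k1 \<noteq> 0" "k2 \<noteq> 0" "w \<noteq> 0" "den \<noteq> 0"
  using k_pos w_pos den_pos by auto

lemma x_over_k: "x1 / k1 = k1 * (2*lam + a2 - 1) / (a2 - a1)" "x2 / k2 = k2 * (1 - 2*lam - a1) / (a2 - a1)"
  using k_pos by (simp_all add: x1_def x2_def power2_eq_square)

lemma X_hopf_on_L_eq: "x1 / k1 + x2 / k2 = 1 - lam"
proof -
  have "k1 * (2*lam + a2 - 1) + k2 * (1 - 2*lam - a1) = (1 - lam) * (a2 - a1)"
    by (simp add: k1_def k2_def algebra_simps)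
  moreover have "a2 - a1 > 0" using a1_less a2_greater by simp
  ultimately show ?thesis by (simp add: x_over_k add_divide_distrib[symmetric])
qed

lemma X_hopf_trace_eq: "(k1 - lam) * x1 / k1^2 + (k2 - lam) * x2 / k2^2 = 1 - 2*lam"
proof -
  have "(k1 - lam) * x1 / k1^2 + (k2 - lam) * x2 / k2^2
      = ((k1 - lam) * (2*lam + a2 - 1) + (k2 - lam) * (1 - 2*lam - a1)) / (a2 - a1)"
    using k_pos by (simp add: x1_def x2_def add_divide_distrib)
  also have "\<dots> = 1 - 2*lam"
    using a1_less a2_greater by (simp add: k1_def k2_def field_simps)
  finally show ?thesis .
qed

lemma A_B_inverse: "A ** B = mat 1" "B ** A = mat 1"
  using k_w_den_nonzero unfolding A_def B_def den_def
  by (simp_all add: vec_eq_iff forall_3 matrix_matrix_mult_def sum_3 mat_def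
      add_divide_distrib[symmetric] algebra_simps)

lemma coordinate_change:
  "A *v u + X_hopf = vector [x1 + p1 * u$2 + k1 * u$3, x2 + p2 * u$2 - k2 * u$3, lam + w * u$1]"
  by (simp add: vec_eq_iff forall_3 A_def X_hopf_def matrix_vector_mult_def sum_3 algebra_simps)

definition "f1 y1 y2 z = d1 * (w*y1) / (k1 + w*y1) * (x1 + p1*y2 + k1*z)"
definition "f2 y1 y2 z = d2 * (w*y1) / (k2 + w*y1) * (x2 + p2*y2 - k2*z)"
definition "f3 y1 y2 z = (lam + w*y1) * (1 - (lam + w*y1))
    - (lam + w*y1) / (k1 + w*y1) * (x1 + p1*y2 + k1*z)
    - (lam + w*y1) / (k2 + w*y1) * (x2 + p2*y2 - k2*z)"

lemma F_in_coordinates: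
  "F (A *v u + X_hopf) = vector [f1 (u$1) (u$2) (u$3), f2 (u$1) (u$2) (u$3), f3 (u$1) (u$2) (u$3)]"
  unfolding coordinate_change chemo_F_def f1_def f2_def f3_def
  by (simp add: k1_def k2_def add_ac)

lemma G_in_coordinates:
  "G u $ 1 = f3 (u$1) (u$2) (u$3) / w"
  "G u $ 2 = (k2 * f1 (u$1) (u$2) (u$3) + k1 * f2 (u$1) (u$2) (u$3)) / den"
  "G u $ 3 = (p2 * f1 (u$1) (u$2) (u$3) - p1 * f2 (u$1) (u$2) (u$3)) / den"
  unfolding transf_def matrix_inv_eqI[OF A_B_inverse] F_in_coordinates
  by (simp_all add: B_def matrix_vector_mult_def sum_3 add_divide_distrib diff_divide_distrib)

lemma G_vanishes_on_z_axis:
  assumes "u $ 1 = 0" "u $ 2 = 0"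
  shows "G u = 0"
proof -
  have "f3 0 0 z = lam * ((1 - lam) - (x1/k1 + x2/k2))" for z
    using k_w_den_nonzero by (simp add: f3_def field_simps)
  then show ?thesis
    using assms X_hopf_on_L_eq by (simp add: vec_eq_iff forall_3 G_in_coordinates f1_def f2_def)
qed

lemma dpart_G23_vanish:
  assumes "u $ 1 = 0" "i \<noteq> 1" "j \<noteq> 1"
  shows "dpart j (\<lambda>u. G u $ i) u = 0"
proof (rule dpart_eq_0_if_constant_along)
  show "G (u + t *\<^sub>R axis j 1) $ i = 0" for t
    using assms exhaust_3[of i] by (auto simp: G_in_coordinates f1_def f2_def axis_def)
qed

lemma dpart_G1_2: "dpart 2 (\<lambda>u. G u $ 1) 0 = - w"
proof (rule dpart_eqI[of "\<lambda>t. f3 0 t 0 / w" _ UNIV])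
  show "((\<lambda>t. f3 0 t 0 / w) has_real_derivative - w) (at 0)"
    unfolding f3_def
    apply (rule derivative_eq_intros refl | simp add: k_w_den_nonzero)+
    using w_squared k_w_den_nonzero by (simp add: power2_eq_square field_simps)
qed (simp_all add: G_in_coordinates axis_def)

lemma dpart_G1_3: "dpart 3 (\<lambda>u. G u $ 1) 0 = 0"
  by (rule dpart_eq_0_if_constant_along) (simp add: G_vanishes_on_z_axis axis_def)

lemma dpart_G2_1: "dpart 1 (\<lambda>u. G u $ 2) 0 = w"
proof (rule dpart_eqI[of "\<lambda>t. (k2 * f1 t 0 0 + k1 * f2 t 0 0) / den" _ UNIV])
  show "((\<lambda>t. (k2 * f1 t 0 0 + k1 * f2 t 0 0) / den) has_real_derivative w) (at 0)"
    unfolding f1_def f2_def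
    apply (rule derivative_eq_intros refl | simp add: k_w_den_nonzero)+
    using k_w_den_nonzero(4) by (simp add: divide_eq_eq) (simp add: den_def p1_def p2_def field_simps)
qed (simp_all add: G_in_coordinates axis_def)

lemma dpart_G3_1: "dpart 1 (\<lambda>u. G u $ 3) 0 = 0"
proof (rule dpart_eqI[of "\<lambda>t. (p2 * f1 t 0 0 - p1 * f2 t 0 0) / den" _ UNIV])
  show "((\<lambda>t. (p2 * f1 t 0 0 - p1 * f2 t 0 0) / den) has_real_derivative 0) (at 0)"
    unfolding f1_def f2_def
    apply (rule derivative_eq_intros refl | simp add: k_w_den_nonzero)+
    using k_w_den_nonzero by (simp add: p1_def p2_def field_simps)
qed (simp_all add: G_in_coordinates axis_def)

(* jac_trace z is the trace d_s f^s of the Jacobian of F at the point X_hopf + z (k1, -k2, 0)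
   of L; X_hopf is the point of L where it vanishes (X_hopf_trace_eq). *)
definition "jac_trace z = 1 - 2*lam - (k1 - lam) * (x1 / k1^2 + z / k1) - (k2 - lam) * (x2 / k2^2 - z / k2)"

lemma dpart_G1_1_on_z_axis: "dpart 1 (\<lambda>u. G u $ 1) (z *\<^sub>R axis 3 1) = jac_trace z"
proof (rule dpart_eqI[of "\<lambda>t. f3 t 0 z / w" _ UNIV])
  show "((\<lambda>t. f3 t 0 z / w) has_real_derivative jac_trace z) (at 0)"
    unfolding f3_def
    apply (rule derivative_eq_intros refl | simp add: k_w_den_nonzero)+
    using k_w_den_nonzero by (simp add: jac_trace_def power2_eq_square field_simps)
qed (simp_all add: G_in_coordinates axis_def)

lemma dpart_G1_1: "dpart 1 (\<lambda>u. G u $ 1) 0 = 0"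
  using dpart_G1_1_on_z_axis[of 0] X_hopf_trace_eq by (simp add: jac_trace_def)

lemma ipart_G1_31: "ipart [3, 1] (\<lambda>u. G u $ 1) 0 = lam / k1 - lam / k2"
proof (simp only: ipart.simps, rule dpart_eqI[of jac_trace _ UNIV])
  show "(jac_trace has_real_derivative lam / k1 - lam / k2) (at 0)"
    unfolding jac_trace_def
    apply (rule derivative_eq_intros refl | simp add: k_w_den_nonzero)+
    using k_w_den_nonzero by (simp add: field_simps)
qed (simp_all add: dpart_G1_1_on_z_axis)

lemma dpart_G3_1_on_y1_axis:
  assumes "k1 + w * t > 0"
  shows "dpart 1 (\<lambda>u. G u $ 3) (t *\<^sub>R axis 1 1)
           = p1 * p2 * w * (k1^2 / (k1 + w*t)^2 - k2^2 / (k2 + w*t)^2) / den"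
proof (rule dpart_eqI[of "\<lambda>s. (p2 * f1 (t + s) 0 0 - p1 * f2 (t + s) 0 0) / den" _ UNIV])
  have pos: "k1 + w * t > 0" "k2 + w * t > 0" using assms k1_less_k2 by auto
  have numerators: "(w * d1 * (k1 + w * t) - d1 * (w * t) * w) * x1 = p1 * w * k1^2"
    "(w * d2 * (k2 + w * t) - d2 * (w * t) * w) * x2 = p2 * w * k2^2"
    using k_w_den_nonzero by (simp_all add: p1_def p2_def power2_eq_square algebra_simps)
  show "((\<lambda>s. (p2 * f1 (t + s) 0 0 - p1 * f2 (t + s) 0 0) / den) has_real_derivative
          p1 * p2 * w * (k1^2 / (k1 + w*t)^2 - k2^2 / (k2 + w*t)^2) / den) (at 0)"
    unfolding f1_def f2_def
    apply (rule derivative_eq_intros refl | simp add: k_w_den_nonzero pos pos[THEN less_imp_neq, symmetric])+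
    unfolding numerators by (simp add: power2_eq_square right_diff_distrib mult_ac)
qed (simp_all add: G_in_coordinates axis_def algebra_simps)

lemma ipart_G3_11: "ipart [1, 1] (\<lambda>u. G u $ 3) 0 = - 2 * w^2 * p1 * p2 * (1/k1 - 1/k2) / den"
proof (simp only: ipart.simps,
    rule dpart_eqI[of "\<lambda>t. p1 * p2 * w * (k1^2 / (k1 + w*t)^2 - k2^2 / (k2 + w*t)^2) / den"
      _ "{-k1/w<..}"])
  show "((\<lambda>t. p1 * p2 * w * (k1^2 / (k1 + w*t)^2 - k2^2 / (k2 + w*t)^2) / den) has_real_derivative
          - 2 * w^2 * p1 * p2 * (1/k1 - 1/k2) / den) (at 0)"
    apply (rule derivative_eq_intros refl | simp add: k_w_den_nonzero)+
    using k_w_den_nonzero by (simp add: field_simps eval_nat_numeral)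
  show "dpart 1 (\<lambda>u. G u $ 3) (0 + t *\<^sub>R axis 1 1)
          = p1 * p2 * w * (k1^2 / (k1 + w*t)^2 - k2^2 / (k2 + w*t)^2) / den" if "t \<in> {-k1/w<..}" for t
    using that w_pos by (simp add: dpart_G3_1_on_y1_axis field_simps)
qed (use k_pos w_pos in auto)

lemma ipart_G23_vanish:
  assumes "i \<noteq> 1" "j \<noteq> 1" "l \<noteq> 1"
  shows "ipart [l, j] (\<lambda>u. G u $ i) 0 = 0"
proof (simp only: ipart.simps, rule dpart_eq_0_if_constant_along)
  show "dpart j (\<lambda>u. G u $ i) (0 + t *\<^sub>R axis l 1) = 0" for t
    using assms by (intro dpart_G23_vanish) (simp add: axis_def)
qed

lemma dz_divergence_G_pos: "ipart [3, 1] (\<lambda>u. G u $ 1) 0 + ipart [3, 2] (\<lambda>u. G u $ 2) 0 > 0"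
  using lam_pos k_pos k1_less_k2
  by (simp del: ipart.simps add: ipart_G1_31 ipart_G23_vanish frac_less2)

lemma laplacian_G3_neg: "ipart [1, 1] (\<lambda>u. G u $ 3) 0 + ipart [2, 2] (\<lambda>u. G u $ 3) 0 < 0"
proof -
  have "1 / k1 - 1 / k2 > 0" using k_pos k1_less_k2 by (simp add: frac_less2)
  then show ?thesis
    using w_pos p_pos den_pos by (simp del: ipart.simps add: ipart_G3_11 ipart_G23_vanish)
qed

lemma jacobian_G: "dpart j (\<lambda>u. G u $ i) 0 = hopf_jac w $ i $ j"
  using exhaust_3[of i] exhaust_3[of j]
    dpart_G1_1 dpart_G1_2 dpart_G1_3 dpart_G2_1 dpart_G3_1 dpart_G23_vanish[of 0]
  by (auto simp: hopf_jac_def)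

lemma X_hopf_in_L: "X_hopf \<in> L"
  using x_pos lam_pos X_hopf_on_L_eq by (simp add: chemo_L_def pos3_def X_hopf_def k1_def k2_def)

lemma L_subset_z_axis: "L \<subseteq> {A *v u + X_hopf | u. u $ 1 = 0 \<and> u $ 2 = 0}"
proof
  fix Y assume "Y \<in> L"
  then have Y: "Y $ 3 = lam" "Y $ 1 / k1 + Y $ 2 / k2 = 1 - lam"
    by (auto simp: chemo_L_def k1_def k2_def)
  define u where "u = (vector [0, 0, (Y $ 1 - x1) / k1] :: real^3)"
  have "Y $ 1 / k1 + Y $ 2 / k2 = x1 / k1 + x2 / k2" using Y X_hopf_on_L_eq by simp
  then have "Y $ 2 = x2 - k2 * ((Y $ 1 - x1) / k1)" using k_w_den_nonzero by (simp add: field_simps)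
  then have "Y = A *v u + X_hopf"
    unfolding coordinate_change using k_w_den_nonzero Y by (simp add: u_def vec_eq_iff forall_3)
  then show "Y \<in> {A *v u + X_hopf | u. u $ 1 = 0 \<and> u $ 2 = 0}" by (auto simp: u_def)
qed

lemma hopf_coords_X_hopf: "hopf_coords pos3 F L X_hopf A w"
  unfolding hopf_coords_def
proof (intro conjI)
  show "smooth_field_on pos3 F"
    using a1_pos a1_less a2_greater by (intro smooth_field_on_chemo_F) auto
  show "L \<subseteq> pos3" by (auto simp: chemo_L_def)
  show "invertible A" unfolding invertible_def using A_B_inverse by blast
qed (use chemo_F_vanishes_on_chemo_L X_hopf_in_L w_pos L_subset_z_axis G_vanishes_on_z_axis
      jacobian_G dz_divergence_G_pos in auto)

lemma elliptic_hopf_point_X_hopf: "elliptic_hopf_point pos3 F L X_hopf"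
  unfolding elliptic_hopf_point_def Let_def
  using hopf_coords_X_hopf dz_divergence_G_pos laplacian_G3_neg
  by (intro exI[of _ A] exI[of _ w]) (simp del: ipart.simps add: mult_pos_neg)

end

theorem lemma1:
  fixes d1 d2 lam a1 a2 :: real
  assumes "d1 > 0" "d2 > 0" "0 < lam" "lam < 1/2"
    and "0 < a1" "a1 < 1 - 2*lam" "1 - 2*lam < a2" "a2 < 1"
  defines "XH \<equiv> (vector [(lam + a1)^2 * (2*lam + a2 - 1) / (a2 - a1),
                          (lam + a2)^2 * (1 - 2*lam - a1) / (a2 - a1),
                          lam] :: real^3)"
  shows "XH \<in> chemo_L lam a1 a2 \<and>
         elliptic_hopf_point pos3 (chemo_F d1 d2 lam a1 a2) (chemo_L lam a1 a2) XH"
proof -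
  interpret chemostat_hopf d1 d2 lam a1 a2
    using assms by unfold_locales auto
  have "XH = X_hopf" by (simp add: XH_def X_hopf_def x1_def x2_def k1_def k2_def)
  then show ?thesis using X_hopf_in_L elliptic_hopf_point_X_hopf by simp
qed

end
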